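(* For all $x,y\in\mathbb{B}^2$, $$\tilde\tau_{\mathbb{B}^2}(x,y)\ge\begin{cases}\log\Big(1+2\sqrt{\frac{|x-y|\sqrt{|x+y|^2+|x-y|^2}}{4-|x+y|^2-|x-y|^2}}\Big), & \text{if } |x+y|\Big(1+\frac{4}{|x+y|^2+|x-y|^2}\Big)\le4,\\[2mm] \log\Big(1+\frac{2|x-y|}{\sqrt{(2-|x+y|)^2+|x-y|^2}}\Big), & \text{if } |x+y|\Big(1+\frac{4}{|x+y|^2+|x-y|^2}\Big)>4,\end{cases}$$ (for $x=y$ the left-hand side and both expressions are interpreted as $0$), and, whenever $|x+y|+|x-y|<2$, $$\tilde\tau_{\mathbb{B}^2}(x,y)\le\log\Big(1+\frac{2|x-y|}{\sqrt{(2-|x+y|)^2-|x-y|^2}}\Big).$$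
   Context: $\mathbb{B}^2$ is the open unit disk. For a proper subdomain $D\subsetneq\mathbb{R}^n$ and $x,y\in D$, $\tilde\tau_D(x,y)=\log\big(1+\sup_{p\in\partial D}\frac{|x-y|}{\sqrt{|x-p||y-p|}}\big)$ (the scale invariant Cassinian metric). *)

theory Defs
  imports "HOL-Analysis.Analysis"
begin

definition sic_metric :: "'a::euclidean_space set \<Rightarrow> 'a \<Rightarrow> 'a \<Rightarrow> real" where
  "sic_metric D x y =
     ln (1 + (SUP p\<in>frontier D. dist x y / sqrt (dist x p * dist y p)))"

end

(*
  The boundary of the unit disc is the unit circle, so tau(x, y) = ln (1 + |x - y| / sqrt m) with
  m the least value of |p - x| |p - y| over |p| = 1. Identify R^2 with C and put a = (x + y) / 2,
  b = (x - y) / 2; then |p - x| |p - y| = |(p - a)^2 - b^2|.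

  The upper bound follows from |(p - a)^2 - b^2| >= |p - a|^2 - |b|^2 >= (1 - |a|)^2 - |b|^2, and
  the second lower bound from the choice p = a / |a|.

  For the first lower bound rotate so that a = A >= 0, and let r^2 = A^2 + |b|^2. The hypothesis
  says that the circle has a point q with Re q = A (1 + r^2) / (2 r^2), and for it
  |(q - A)^2 + |b|^2| = |b| (1 - r^2) / r. Either q or its conjugate p already satisfies
  |(p - A)^2 - b^2| <= |(q - A)^2 + |b|^2|, or multiplying q - A (or its conjugate) by a square
  root of -b^2 / |b|^2 gives a point z with |z^2 - b^2| equal to that value and A + z outside the
  disc. In the latter case the minimum modulus principle for g(t) = (1 - conj x t) (1 - conj y t),
  which has no zeros in the closed disc and satisfies |g t| = |t - x| |t - y| on the circle,
  evaluated at t = 1 / conj (A + z), brings the bound back to the circle.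
*)

theory Submission
  imports Defs "HOL-Complex_Analysis.Complex_Analysis"
begin

lemma sic_metric_ge_frontier_point:
  fixes D :: "'a::euclidean_space set"
  assumes "open D" and "x \<in> D" and "y \<in> D" and "p \<in> frontier D"
  shows "ln (1 + dist x y / sqrt (dist x p * dist y p)) \<le> sic_metric D x y"
proof -
  define F where "F q = dist x y / sqrt (dist x q * dist y q)" for q
  have "x \<notin> frontier D" "y \<notin> frontier D"
    using assms by (simp_all add: frontier_def interior_open)
  then have pos: "infdist x (frontier D) > 0" "infdist y (frontier D) > 0"
    using assms(4) by (auto intro!: infdist_pos_not_in_closed)
  have "F q \<le> dist x y / sqrt (infdist x (frontier D) * infdist y (frontier D))"
    if "q \<in> frontier D" for q
    unfolding F_def using infdist_le[OF that, of x] infdist_le[OF that, of y] pos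
    by (intro divide_left_mono real_sqrt_le_mono mult_mono)
      (auto intro!: mult_pos_pos dest: order.strict_trans2)
  then have "bdd_above (F ` frontier D)"
    by (rule bdd_aboveI2)
  then have "F p \<le> (SUP q\<in>frontier D. F q)"
    using assms(4) by (intro cSUP_upper)
  moreover have "0 \<le> F p"
    by (simp add: F_def)
  ultimately show ?thesis
    unfolding sic_metric_def F_def[symmetric] by simp
qed

lemma sic_metric_le_of_frontier_bound:
  assumes "frontier D \<noteq> {}"
    and "\<And>p. p \<in> frontier D \<Longrightarrow> dist x y / sqrt (dist x p * dist y p) \<le> M"
  shows "sic_metric D x y \<le> ln (1 + M)"
proof -
  define F where "F q = dist x y / sqrt (dist x q * dist y q)" for q
  obtain p where p: "p \<in> frontier D"
    using assms(1) by blast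
  have "bdd_above (F ` frontier D)"
    using assms(2) unfolding F_def by (rule bdd_aboveI2)
  then have "F p \<le> (SUP q\<in>frontier D. F q)"
    using p by (intro cSUP_upper)
  then have "0 \<le> (SUP q\<in>frontier D. F q)"
    by (rule order.trans[rotated]) (simp add: F_def)
  moreover have "(SUP q\<in>frontier D. F q) \<le> M"
    using assms unfolding F_def by (rule cSUP_least)
  ultimately show ?thesis
    unfolding sic_metric_def F_def by simp
qed

definition complex_of_vec2 :: "real^2 \<Rightarrow> complex" where
  "complex_of_vec2 v = Complex (v$1) (v$2)"

lemma norm_complex_of_vec2 [simp]: "norm (complex_of_vec2 v) = norm v"
  by (simp add: complex_of_vec2_def norm_vec_def L2_set_def sum_2 cmod_def)

lemma complex_of_vec2_add: "complex_of_vec2 (v + w) = complex_of_vec2 v + complex_of_vec2 w"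
  and complex_of_vec2_diff: "complex_of_vec2 (v - w) = complex_of_vec2 v - complex_of_vec2 w"
  by (simp_all add: complex_of_vec2_def complex_eq_iff)

lemma surj_complex_of_vec2: "surj complex_of_vec2"
proof (rule surjI)
  show "complex_of_vec2 (vector [Re z, Im z]) = z" for z
    by (simp add: complex_of_vec2_def complex_eq_iff)
qed

lemma sic_metric_unit_ball_complex_of_vec2:
  "sic_metric (ball 0 1) x y = sic_metric (ball 0 1) (complex_of_vec2 x) (complex_of_vec2 y)"
proof -
  have "sphere 0 1 = complex_of_vec2 ` sphere 0 1"
    using surj_complex_of_vec2 by (force simp: image_iff)
  moreover have "dist (complex_of_vec2 v) (complex_of_vec2 w) = dist v w" for v w
    by (simp add: dist_norm flip: complex_of_vec2_diff)
  ultimately show ?thesis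
    by (simp add: sic_metric_def image_image)
qed

lemma parallelogram_law:
  fixes x y :: "'a::real_inner"
  shows "(norm (x + y))\<^sup>2 + (norm (x - y))\<^sup>2 = 2 * ((norm x)\<^sup>2 + (norm y)\<^sup>2)"
  by (simp add: power2_norm_eq_inner inner_add inner_diff inner_commute)

lemma norm_mult_diff_symmetric_pair:
  fixes p c b :: "'a::real_normed_field"
  shows "norm (p - (c + b)) * norm (p - (c - b)) = norm ((p - c)\<^sup>2 - b\<^sup>2)"
proof -
  have "(p - (c + b)) * (p - (c - b)) = (p - c)\<^sup>2 - b\<^sup>2"
    by (simp add: power2_eq_square algebra_simps)
  then show ?thesis
    by (metis norm_mult)
qed

lemma norm_mult_diff_eq_midpoint:
  fixes p x y :: "'a::real_normed_field"
  shows "norm (p - x) * norm (p - y) = norm ((p - (x + y) / 2)\<^sup>2 - ((x - y) / 2)\<^sup>2)"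
  using norm_mult_diff_symmetric_pair[of p "(x + y) / 2" "(x - y) / 2"]
  by (simp add: field_simps)

lemma norm_unit_minus_of_real_power2:
  fixes q :: complex and A :: real
  assumes "norm q = 1"
  shows "(norm (q - A))\<^sup>2 = 1 - 2 * A * Re q + A\<^sup>2"
  using assms cmod_power2[of q] by (simp add: cmod_power2) (simp add: power2_eq_square algebra_simps)

lemma cis_Arg_mult_norm: "cis (Arg z) * of_real (norm z) = z"
  using rcis_cmod_Arg[of z] by (simp add: rcis_def mult.commute)

lemma rotation_symmetric_normal_form:
  fixes x y :: complex
  obtains \<omega> b where "norm \<omega> = 1" and "norm b = norm (x - y) / 2"
    and "x = \<omega> * (of_real (norm (x + y) / 2) + b)" and "y = \<omega> * (of_real (norm (x + y) / 2) - b)"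
proof -
  define \<omega> where "\<omega> = cis (Arg (x + y))"
  define b where "b = (x - y) / (2 * \<omega>)"
  have "norm \<omega> = 1"
    by (simp add: \<omega>_def)
  then have "\<omega> \<noteq> 0"
    by auto
  have sum: "\<omega> * of_real (norm (x + y)) = x + y"
    by (simp add: \<omega>_def cis_Arg_mult_norm)
  have "\<omega> * (of_real (norm (x + y) / 2) + b) = (\<omega> * of_real (norm (x + y)) + (x - y)) / 2"
    and "\<omega> * (of_real (norm (x + y) / 2) - b) = (\<omega> * of_real (norm (x + y)) - (x - y)) / 2"
    using \<open>\<omega> \<noteq> 0\<close> by (simp_all add: b_def field_simps)
  then have "x = \<omega> * (of_real (norm (x + y) / 2) + b)" and "y = \<omega> * (of_real (norm (x + y) / 2) - b)"
    unfolding sum by simp_all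
  moreover have "norm b = norm (x - y) / 2"
    using \<open>norm \<omega> = 1\<close> by (simp add: b_def norm_divide norm_mult)
  ultimately show ?thesis
    using that \<open>norm \<omega> = 1\<close> by blast
qed

lemma div_sqrt_mult:
  fixes d X :: real
  assumes "0 \<le> d"
  shows "d / sqrt (d * X) = sqrt (d / X)"
  using assms by (simp add: real_sqrt_mult real_sqrt_divide real_div_sqrt flip: divide_divide_eq_left)

lemma minimum_modulus_frontier:
  fixes f :: "complex \<Rightarrow> complex"
  assumes "open S" and "bounded S"
    and "f holomorphic_on S" and "continuous_on (closure S) f"
    and nz: "\<And>z. z \<in> closure S \<Longrightarrow> f z \<noteq> 0"
    and "\<xi> \<in> closure S"
  obtains p where "p \<in> frontier S" and "norm (f p) \<le> norm (f \<xi>)"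
proof (cases "\<xi> \<in> frontier S")
  case True
  then show ?thesis
    using that by blast
next
  case False
  then have "\<xi> \<in> S"
    using \<open>\<xi> \<in> closure S\<close> by (simp add: closure_Un_frontier)
  have nz_S: "\<And>z. z \<in> S \<Longrightarrow> f z \<noteq> 0"
    and nz_frontier: "\<And>z. z \<in> frontier S \<Longrightarrow> f z \<noteq> 0"
    using nz by (simp_all add: closure_Un_frontier)
  from \<open>\<xi> \<in> S\<close> have "frontier S \<noteq> {}"
    using \<open>bounded S\<close> by (intro frontier_not_empty) auto
  moreover have "continuous_on (frontier S) (\<lambda>z. norm (f z))"
    using \<open>continuous_on (closure S) f\<close> closure_Un_frontier
    by (blast intro: continuous_on_norm continuous_on_subset)
  ultimately obtain p where p: "p \<in> frontier S"
    and p_min: "\<And>z. z \<in> frontier S \<Longrightarrow> norm (f p) \<le> norm (f z)"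
    using continuous_attains_inf[of "frontier S"] \<open>bounded S\<close> by blast
  have "norm (inverse (f \<xi>)) \<le> norm (inverse (f p))"
  proof (rule maximum_modulus_frontier[where f = "\<lambda>z. inverse (f z)"])
    show "(\<lambda>z. inverse (f z)) holomorphic_on interior S"
      using assms(1,3) nz_S by (auto simp: interior_open intro!: holomorphic_intros)
    show "continuous_on (closure S) (\<lambda>z. inverse (f z))"
      using assms(4) nz by (auto intro!: continuous_intros)
    show "norm (inverse (f z)) \<le> norm (inverse (f p))" if "z \<in> frontier S" for z
      using p_min[OF that] nz_frontier p that
      by (auto simp: norm_inverse intro!: le_imp_inverse_le)
  qed (use assms \<open>\<xi> \<in> S\<close> in auto)
  then have "norm (f p) \<le> norm (f \<xi>)"
    using nz_S nz_frontier p \<open>\<xi> \<in> S\<close>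
    by (auto simp: norm_inverse)
  with p show ?thesis
    using that by blast
qed

lemma norm_one_minus_cnj_mult:
  fixes x p :: complex
  assumes "norm p = 1"
  shows "norm (1 - cnj x * p) = norm (p - x)"
proof -
  have "p * cnj p = 1"
    using assms complex_norm_square[of p] by simp
  then have "p - x = p * cnj (1 - cnj x * p)"
    by (simp add: algebra_simps)
  then show ?thesis
    by (metis assms complex_mod_cnj mult_1 norm_mult)
qed

lemma exists_unit_circle_product_le_exterior:
  fixes x y q :: complex
  assumes "norm x < 1" and "norm y < 1" and "norm q \<ge> 1"
  obtains p where "norm p = 1"
    and "norm (p - x) * norm (p - y) \<le> norm (q - x) * norm (q - y) / (norm q)\<^sup>2"
proof -
  define g where "g t = (1 - cnj x * t) * (1 - cnj y * t)" for t
  have "g t \<noteq> 0" if "t \<in> closure (ball 0 1)" for t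
  proof -
    have "norm (cnj z * t) < 1" if "norm z < 1" for z
      using \<open>t \<in> closure (ball 0 1)\<close> that
      by (simp add: norm_mult) (metis le_less_trans mult_left_le norm_ge_zero)
    then have "cnj x * t \<noteq> 1" "cnj y * t \<noteq> 1"
      using assms by force+
    then show ?thesis
      by (simp add: g_def)
  qed
  moreover have "inverse (cnj q) \<in> closure (ball 0 1)"
    using assms(3) by (simp add: norm_inverse inverse_le_1_iff)
  moreover have "g holomorphic_on ball 0 1" "continuous_on (closure (ball 0 1)) g"
    unfolding g_def by (auto intro!: holomorphic_intros continuous_intros)
  ultimately obtain p where p: "p \<in> sphere 0 1"
    and le: "norm (g p) \<le> norm (g (inverse (cnj q)))"
    by (elim minimum_modulus_frontier[of "ball 0 1", rotated 2]) auto
  have "norm (g p) = norm (p - x) * norm (p - y)"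
    using p by (simp add: g_def norm_mult norm_one_minus_cnj_mult)
  moreover have "norm (1 - cnj z * inverse (cnj q)) = norm (q - z) / norm q" for z
  proof -
    have "q \<noteq> 0"
      using assms(3) by auto
    then have "1 - cnj z * inverse (cnj q) = cnj (q - z) / cnj q"
      by (simp add: field_simps)
    then show ?thesis
      by (simp add: norm_divide flip: complex_cnj_diff)
  qed
  then have "norm (g (inverse (cnj q))) = norm (q - x) * norm (q - y) / (norm q)\<^sup>2"
    by (simp add: g_def norm_mult power2_eq_square)
  ultimately show ?thesis
    using that p le by simp
qed

lemma norm_square_shift_add_on_circle:
  fixes q :: complex and A R :: real
  assumes q: "norm q = 1" and r: "A\<^sup>2 + R > 0"
    and u: "Re q = A * (1 + (A\<^sup>2 + R)) / (2 * (A\<^sup>2 + R))"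
  shows "(norm ((q - A)\<^sup>2 + R))\<^sup>2 = R * (1 - (A\<^sup>2 + R))\<^sup>2 / (A\<^sup>2 + R)"
proof -
  define r where "r = A\<^sup>2 + R"
  have "(norm (q - A))\<^sup>2 = 1 - 2 * A * Re q + A\<^sup>2"
    using q by (rule norm_unit_minus_of_real_power2)
  also have "\<dots> = R / r"
    using r unfolding u r_def by (simp add: field_simps power2_eq_square)
  finally have shift: "(norm (q - A))\<^sup>2 = R / r" .
  have re: "Re q - A = A * (1 - r) / (2 * r)"
    using r unfolding u r_def by (simp add: field_simps)
  have "(norm ((q - A)\<^sup>2 + R))\<^sup>2
        = ((norm (q - A))\<^sup>2)\<^sup>2 + 2 * R * (2 * (Re q - A)\<^sup>2 - (norm (q - A))\<^sup>2) + R\<^sup>2"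
    by (simp add: cmod_power2 Re_power2 Im_power2) (simp add: power2_eq_square algebra_simps)
  also have "\<dots> = R * (1 - r)\<^sup>2 / r"
  proof -
    have A: "A\<^sup>2 = r - R" and "r \<noteq> 0"
      using r by (simp_all add: r_def)
    then show ?thesis
      unfolding shift re power_divide power_mult_distrib A
      by (simp add: field_simps power2_eq_square)
  qed
  finally show ?thesis
    by (simp add: r_def)
qed

lemma norm_diff_le_norm_add_norm:
  fixes W \<beta> :: complex
  assumes "Re W \<ge> 0" and "Im W * Im \<beta> \<ge> 0"
  shows "norm (W - \<beta>) \<le> norm (W + norm \<beta>)"
proof -
  have "- Re \<beta> * Re W \<le> norm \<beta> * Re W"
    using assms(1) abs_Re_le_cmod[of \<beta>] by (intro mult_right_mono) auto
  then have "(norm (W - \<beta>))\<^sup>2 \<le> (norm (W + norm \<beta>))\<^sup>2"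
    using assms(2) cmod_power2[of \<beta>, unfolded power2_eq_square]
    by (simp add: cmod_power2) (simp add: power2_eq_square algebra_simps)
  then show ?thesis
    by (simp add: power2_le_iff_abs_le)
qed

lemma exists_unit_circle_square_diff_le_of_Re_nonneg:
  fixes q b :: complex and A :: real
  assumes "norm q = 1" and "Re ((q - A)\<^sup>2) \<ge> 0"
  obtains p :: complex where "norm p = 1"
    and "norm ((p - A)\<^sup>2 - b\<^sup>2) \<le> norm ((q - A)\<^sup>2 + of_real ((norm b)\<^sup>2))"
proof (cases "Im ((q - A)\<^sup>2) * Im (b\<^sup>2) \<ge> 0")
  case True
  then show ?thesis
    using that[of q] assms norm_diff_le_norm_add_norm[of "(q - A)\<^sup>2" "b\<^sup>2"]
    by (simp add: norm_power)
next
  case False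
  have conj: "(cnj q - A)\<^sup>2 = cnj ((q - A)\<^sup>2)"
    by simp
  have "norm ((cnj q - A)\<^sup>2 - b\<^sup>2) \<le> norm ((cnj q - A)\<^sup>2 + norm (b\<^sup>2))"
    using assms(2) False
    by (intro norm_diff_le_norm_add_norm) (auto simp: Re_power2 Im_power2)
  also have "\<dots> = norm ((q - A)\<^sup>2 + of_real ((norm b)\<^sup>2))"
    unfolding conj by (metis complex_cnj_add complex_cnj_complex_of_real complex_mod_cnj norm_power)
  finally show ?thesis
    using that[of "cnj q"] assms(1) by simp
qed

lemma exists_sign_Re_mult_ge:
  fixes \<zeta> w :: complex
  assumes "norm \<zeta> = 1" and "0 \<le> Re w" and "Re w \<le> \<bar>Im w\<bar>"
  obtains \<zeta>' w' where "\<zeta>' \<in> {\<zeta>, - \<zeta>}" and "w' \<in> {w, cnj w}" and "Re w \<le> Re (\<zeta>' * w')"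
proof -
  define \<zeta>' where "\<zeta>' = (if Re \<zeta> \<ge> 0 then \<zeta> else - \<zeta>)"
  define w' where "w' = (if Im \<zeta>' * Im w \<le> 0 then w else cnj w)"
  have "Re \<zeta>' = \<bar>Re \<zeta>\<bar>" "\<bar>Im \<zeta>'\<bar> = \<bar>Im \<zeta>\<bar>"
    by (auto simp: \<zeta>'_def)
  moreover have "Re w' = Re w" "\<bar>Im w'\<bar> = \<bar>Im w\<bar>" "Im \<zeta>' * Im w' \<le> 0"
    by (auto simp: w'_def)
  ultimately have re: "Re (\<zeta>' * w') = \<bar>Re \<zeta>\<bar> * Re w + \<bar>Im \<zeta>\<bar> * \<bar>Im w\<bar>"
    using abs_of_nonpos[of "Im \<zeta>' * Im w'"] by (simp add: abs_mult)
  have unit: "(Re \<zeta>)\<^sup>2 + (Im \<zeta>)\<^sup>2 = 1"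
    using assms(1) cmod_power2[of \<zeta>] by simp
  have "\<bar>Re \<zeta>\<bar> \<le> 1" "\<bar>Im \<zeta>\<bar> \<le> 1"
    using assms(1) abs_Re_le_cmod abs_Im_le_cmod by metis+
  then have "(Re \<zeta>)\<^sup>2 \<le> \<bar>Re \<zeta>\<bar>" "(Im \<zeta>)\<^sup>2 \<le> \<bar>Im \<zeta>\<bar>"
    using mult_left_le[of "\<bar>Re \<zeta>\<bar>" "\<bar>Re \<zeta>\<bar>"] mult_left_le[of "\<bar>Im \<zeta>\<bar>" "\<bar>Im \<zeta>\<bar>"]
    by (simp_all add: power2_eq_square)
  then have "1 \<le> \<bar>Re \<zeta>\<bar> + \<bar>Im \<zeta>\<bar>"
    using unit by linarith
  then have "Re w \<le> \<bar>Re \<zeta>\<bar> * Re w + \<bar>Im \<zeta>\<bar> * Re w"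
    using mult_right_mono[OF _ assms(2)] by (metis distrib_right mult_1)
  also have "\<dots> \<le> Re (\<zeta>' * w')"
    unfolding re using assms(3) by (simp add: mult_left_mono)
  finally show ?thesis
    using that[of \<zeta>' w'] by (simp add: \<zeta>'_def w'_def)
qed

lemma norm_of_real_add_ge_one:
  fixes q z :: complex and A :: real
  assumes "norm q = 1" and "0 \<le> A" and "norm z = norm (q - A)" and "Re q - A \<le> Re z"
  shows "1 \<le> norm (A + z)"
proof -
  have "(norm z)\<^sup>2 = 1 - 2 * A * Re q + A\<^sup>2"
    using norm_unit_minus_of_real_power2[OF assms(1)] assms(3) by simp
  moreover have "(norm (A + z))\<^sup>2 = A\<^sup>2 + 2 * (A * Re z) + (norm z)\<^sup>2"
    by (simp add: cmod_power2) (simp add: power2_eq_square algebra_simps)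
  moreover have "A * (Re q - A) \<le> A * Re z"
    using assms(2,4) by (simp add: mult_left_mono)
  ultimately have "1 \<le> (norm (A + z))\<^sup>2"
    by (simp add: right_diff_distrib power2_eq_square mult.assoc)
  then show ?thesis
    by (metis one_power2 norm_ge_zero power2_le_imp_le)
qed

lemma exists_unit_circle_square_diff_le_of_Re_le_Im:
  fixes q b :: complex and A :: real
  assumes "norm (A + b) < 1" and "norm (A - b) < 1" and "A \<ge> 0" and "b \<noteq> 0"
    and "norm q = 1" and "0 \<le> Re q - A" and "Re q - A \<le> \<bar>Im q\<bar>"
  obtains p :: complex where "norm p = 1"
    and "norm ((p - A)\<^sup>2 - b\<^sup>2) \<le> norm ((q - A)\<^sup>2 + of_real ((norm b)\<^sup>2))"
proof -
  define \<zeta> where "\<zeta> = \<i> * (b / norm b)"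
  have "norm \<zeta> = 1"
    using assms(4) by (simp add: \<zeta>_def norm_mult norm_divide)
  then obtain \<zeta>' w where \<zeta>': "\<zeta>' \<in> {\<zeta>, - \<zeta>}" and w: "w \<in> {q - A, cnj (q - A)}"
    and re: "Re q - A \<le> Re (\<zeta>' * w)"
    using exists_sign_Re_mult_ge[of \<zeta> "q - A"] assms(6,7) by auto
  define z where "z = \<zeta>' * w"
  have "\<zeta>'\<^sup>2 * of_real ((norm b)\<^sup>2) = - b\<^sup>2"
    using \<zeta>' assms(4) by (auto simp: \<zeta>_def power_mult_distrib power_divide)
  then have "z\<^sup>2 - b\<^sup>2 = \<zeta>'\<^sup>2 * (w\<^sup>2 + of_real ((norm b)\<^sup>2))"
    by (simp add: z_def power_mult_distrib algebra_simps)
  moreover have "norm \<zeta>' = 1"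
    using \<zeta>' \<open>norm \<zeta> = 1\<close> by auto
  moreover have "norm (w\<^sup>2 + of_real ((norm b)\<^sup>2)) = norm ((q - A)\<^sup>2 + of_real ((norm b)\<^sup>2))"
    using w by (metis complex_cnj_add complex_cnj_complex_of_real complex_cnj_power complex_mod_cnj insertE singletonD)
  ultimately have zb: "norm (z\<^sup>2 - b\<^sup>2) = norm ((q - A)\<^sup>2 + of_real ((norm b)\<^sup>2))"
    by (simp add: norm_mult norm_power)
  have "norm w = norm (q - A)"
    using w by (metis complex_mod_cnj insertE singletonD)
  then have "1 \<le> norm (A + z)"
    using \<open>norm \<zeta>' = 1\<close> assms(3,5) re
    by (intro norm_of_real_add_ge_one[of q]) (simp_all add: z_def norm_mult)
  then obtain p where p: "norm p = 1"
    and le: "norm (p - (A + b)) * norm (p - (A - b))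
               \<le> norm (A + z - (A + b)) * norm (A + z - (A - b)) / (norm (A + z))\<^sup>2"
    by (rule exists_unit_circle_product_le_exterior[OF assms(1,2)])
  have "norm ((p - A)\<^sup>2 - b\<^sup>2) \<le> norm (z\<^sup>2 - b\<^sup>2) / (norm (A + z))\<^sup>2"
    using le unfolding norm_mult_diff_symmetric_pair by simp
  also have "\<dots> \<le> norm (z\<^sup>2 - b\<^sup>2)"
    using \<open>1 \<le> norm (A + z)\<close> by (simp add: divide_le_eq one_le_power mult_le_cancel_left1)
  finally show ?thesis
    using that p zb by simp
qed

lemma exists_unit_circle_product_le_symmetric:
  fixes A :: real and b :: complex
  assumes "A \<ge> 0" and "b \<noteq> 0" and "norm (A + b) < 1" and "norm (A - b) < 1"
    and "A * (1 + (A\<^sup>2 + (norm b)\<^sup>2)) \<le> 2 * (A\<^sup>2 + (norm b)\<^sup>2)"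
  obtains p :: complex where "norm p = 1"
    and "norm (p - (A + b)) * norm (p - (A - b))
           \<le> norm b * (1 - (A\<^sup>2 + (norm b)\<^sup>2)) / sqrt (A\<^sup>2 + (norm b)\<^sup>2)"
proof -
  define r where "r = A\<^sup>2 + (norm b)\<^sup>2"
  have "0 < r"
    using assms(2) by (simp add: r_def add_nonneg_pos)
  have "(norm (A + b))\<^sup>2 < 1" "(norm (A - b))\<^sup>2 < 1"
    using assms(3,4) abs_square_less_1[of "norm (A + b)"] abs_square_less_1[of "norm (A - b)"]
    by simp_all
  then have "r < 1"
    using parallelogram_law[of "of_real A" b] by (simp add: r_def)
  define u where "u = A * (1 + r) / (2 * r)"
  have "0 \<le> u" "u \<le> 1"
    using assms(1,5) \<open>0 < r\<close> by (simp_all add: u_def r_def)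
  define q where "q = Complex u (sqrt (1 - u\<^sup>2))"
  have "u\<^sup>2 \<le> 1"
    using \<open>0 \<le> u\<close> \<open>u \<le> 1\<close> by (simp add: abs_square_le_1)
  then have "norm q = 1"
    by (simp add: q_def cmod_def)
  have "(norm ((q - A)\<^sup>2 + of_real ((norm b)\<^sup>2)))\<^sup>2 = (norm b * (1 - r) / sqrt r)\<^sup>2"
    using norm_square_shift_add_on_circle[OF \<open>norm q = 1\<close>, of A "(norm b)\<^sup>2"] \<open>0 < r\<close>
    by (simp add: q_def u_def r_def power_divide power_mult_distrib)
  then have at_q: "norm ((q - A)\<^sup>2 + of_real ((norm b)\<^sup>2)) = norm b * (1 - r) / sqrt r"
    using \<open>r < 1\<close> \<open>0 < r\<close> by (simp add: power2_eq_iff_nonneg)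
  obtain p :: complex where "norm p = 1"
    and "norm ((p - A)\<^sup>2 - b\<^sup>2) \<le> norm ((q - A)\<^sup>2 + of_real ((norm b)\<^sup>2))"
  proof (cases "Re ((q - A)\<^sup>2) \<ge> 0")
    case True
    show ?thesis
      using that by (rule exists_unit_circle_square_diff_le_of_Re_nonneg[OF \<open>norm q = 1\<close> True])
  next
    case False
    have "Re q - A = A * (1 - r) / (2 * r)"
      using \<open>0 < r\<close> by (simp add: q_def u_def field_simps)
    then have "0 \<le> Re q - A"
      using assms(1) \<open>r < 1\<close> \<open>0 < r\<close> by simp
    moreover have "Re q - A \<le> \<bar>Im q\<bar>"
      using False abs_le_square_iff[of "Re q - A" "Im q"] by (simp add: Re_power2)
    ultimately show ?thesis
      using that by (rule exists_unit_circle_square_diff_le_of_Re_le_Im[OF assms(3,4,1,2) \<open>norm q = 1\<close>])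
  qed
  with at_q show ?thesis
    using that unfolding norm_mult_diff_symmetric_pair r_def by simp
qed

lemma exists_unit_circle_product_le_small_midpoint:
  fixes x y :: complex
  assumes "norm x < 1" and "norm y < 1" and "x \<noteq> y"
    and "norm (x + y) * (1 + 4 / ((norm (x + y))\<^sup>2 + (norm (x - y))\<^sup>2)) \<le> 4"
  obtains p :: complex where "norm p = 1"
    and "norm (p - x) * norm (p - y)
           \<le> norm (x - y) * (4 - (norm (x + y))\<^sup>2 - (norm (x - y))\<^sup>2)
               / (4 * sqrt ((norm (x + y))\<^sup>2 + (norm (x - y))\<^sup>2))"
proof -
  define s d T where "s = norm (x + y)" and "d = norm (x - y)" and "T = s\<^sup>2 + d\<^sup>2"
  define A where "A = s / 2"
  obtain \<omega> b :: complex where "norm \<omega> = 1" and nb: "norm b = d / 2"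
    and x: "x = \<omega> * (A + b)" and y: "y = \<omega> * (A - b)"
    unfolding A_def s_def d_def by (rule rotation_symmetric_normal_form)
  have "norm (A + b) < 1" "norm (A - b) < 1" "b \<noteq> 0"
    using assms(1-3) \<open>norm \<omega> = 1\<close> by (auto simp: x y norm_mult)
  have "0 < d"
    using assms(3) by (simp add: d_def)
  then have "0 < T"
    by (simp add: T_def add_nonneg_pos)
  have r: "A\<^sup>2 + (norm b)\<^sup>2 = T / 4"
    by (simp add: nb A_def T_def power_divide)
  have "s * (1 + 4 / T) * (T / 8) \<le> 4 * (T / 8)"
    using assms(4) \<open>0 < T\<close> by (intro mult_right_mono) (simp_all add: s_def d_def T_def)
  moreover have "s * (1 + 4 / T) * (T / 8) = A * (1 + T / 4)"
    using \<open>0 < T\<close> by (simp add: A_def field_simps)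
  ultimately have "A * (1 + (A\<^sup>2 + (norm b)\<^sup>2)) \<le> 2 * (A\<^sup>2 + (norm b)\<^sup>2)"
    unfolding r by linarith
  moreover have "0 \<le> A"
    by (simp add: A_def s_def)
  ultimately obtain p' where p': "norm p' = 1"
    and le: "norm (p' - (A + b)) * norm (p' - (A - b))
               \<le> norm b * (1 - (A\<^sup>2 + (norm b)\<^sup>2)) / sqrt (A\<^sup>2 + (norm b)\<^sup>2)"
    using exists_unit_circle_product_le_symmetric \<open>norm (A + b) < 1\<close> \<open>norm (A - b) < 1\<close> \<open>b \<noteq> 0\<close>
    by blast
  have "norm (\<omega> * p' - x) * norm (\<omega> * p' - y) = norm (p' - (A + b)) * norm (p' - (A - b))"
    using \<open>norm \<omega> = 1\<close> by (simp add: x y norm_mult flip: right_diff_distrib)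
  also have "\<dots> \<le> d * (4 - T) / (4 * sqrt T)"
  proof -
    have "d / 2 * (1 - T / 4) / sqrt (T / 4) = d * (4 - T) / (4 * sqrt T)"
      using \<open>0 < T\<close> by (simp add: real_sqrt_divide field_simps)
    then show ?thesis
      using le unfolding r unfolding nb by simp
  qed
  finally show ?thesis
    using that[of "\<omega> * p'"] \<open>norm \<omega> = 1\<close> p' by (simp add: norm_mult s_def d_def T_def diff_diff_eq)
qed

lemma exists_unit_circle_product_le_radial:
  fixes x y :: complex
  assumes "norm x < 1" and "norm y < 1"
  obtains p :: complex where "norm p = 1"
    and "norm (p - x) * norm (p - y) \<le> ((2 - norm (x + y))\<^sup>2 + (norm (x - y))\<^sup>2) / 4"
proof -
  define \<omega> where "\<omega> = cis (Arg (x + y))"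
  have "norm (x + y) < 2"
    using assms norm_triangle_ineq[of x y] by simp
  have "\<omega> - (x + y) / 2 = \<omega> * of_real (1 - norm (x + y) / 2)"
    using cis_Arg_mult_norm[of "x + y"] by (simp add: \<omega>_def algebra_simps)
  then have "norm (\<omega> - (x + y) / 2) = \<bar>1 - norm (x + y) / 2\<bar>"
    by (simp only: norm_mult norm_of_real \<omega>_def norm_cis mult_1)
  then have "norm (\<omega> - (x + y) / 2) = 1 - norm (x + y) / 2"
    using \<open>norm (x + y) < 2\<close> by simp
  then have "norm (\<omega> - x) * norm (\<omega> - y)
             \<le> (1 - norm (x + y) / 2)\<^sup>2 + (norm ((x - y) / 2))\<^sup>2"
    unfolding norm_mult_diff_eq_midpoint
    by (metis norm_power norm_triangle_ineq4)
  also have "\<dots> = ((2 - norm (x + y))\<^sup>2 + (norm (x - y))\<^sup>2) / 4"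
    by (simp add: norm_divide power_divide field_simps)
  finally show ?thesis
    using that[of \<omega>] by (simp add: \<omega>_def)
qed

lemma unit_circle_product_ge:
  fixes x y p :: complex
  assumes "norm x < 1" and "norm y < 1" and "norm p = 1"
  shows "((2 - norm (x + y))\<^sup>2 - (norm (x - y))\<^sup>2) / 4 \<le> norm (p - x) * norm (p - y)"
proof -
  have "1 - norm (x + y) / 2 \<le> norm (p - (x + y) / 2)"
    using assms(3) norm_triangle_ineq2[of p "(x + y) / 2"] by (simp add: norm_divide)
  moreover have "0 \<le> 1 - norm (x + y) / 2"
    using assms(1,2) norm_triangle_ineq[of x y] by simp
  ultimately have "(1 - norm (x + y) / 2)\<^sup>2 \<le> (norm (p - (x + y) / 2))\<^sup>2"
    by (rule power_mono)
  then have "((2 - norm (x + y))\<^sup>2 - (norm (x - y))\<^sup>2) / 4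
             \<le> norm ((p - (x + y) / 2)\<^sup>2) - norm (((x - y) / 2)\<^sup>2)"
    by (simp add: norm_power norm_divide power_divide field_simps)
  also have "\<dots> \<le> norm (p - x) * norm (p - y)"
    unfolding norm_mult_diff_eq_midpoint by (rule norm_triangle_ineq2)
  finally show ?thesis .
qed

lemma sic_metric_unit_disc_ge:
  fixes x y p :: complex
  assumes "norm x < 1" and "norm y < 1" and "norm p = 1"
    and "norm (p - x) * norm (p - y) \<le> P"
  shows "ln (1 + norm (x - y) / sqrt P) \<le> sic_metric (ball 0 1) x y"
proof -
  have "p \<noteq> x" "p \<noteq> y"
    using assms(1-3) by auto
  then have "0 < norm (p - x) * norm (p - y)"
    by simp
  then have "norm (x - y) / sqrt P \<le> dist x y / sqrt (dist x p * dist y p)"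
    using assms(4) by (auto simp: dist_norm norm_minus_commute intro!: divide_left_mono mult_pos_pos)
  moreover have "0 \<le> norm (x - y) / sqrt P"
    using \<open>0 < norm (p - x) * norm (p - y)\<close> assms(4) by simp
  ultimately have "ln (1 + norm (x - y) / sqrt P) \<le> ln (1 + dist x y / sqrt (dist x p * dist y p))"
    by simp
  also have "\<dots> \<le> sic_metric (ball 0 1) x y"
    using assms by (intro sic_metric_ge_frontier_point) auto
  finally show ?thesis .
qed

lemma sic_metric_unit_disc_lower:
  fixes x y :: complex
  assumes "norm x < 1" and "norm y < 1"
  shows "sic_metric (ball 0 1) x y \<ge>
           (if x = y then 0
            else if norm (x + y) * (1 + 4 / ((norm (x + y))\<^sup>2 + (norm (x - y))\<^sup>2)) \<le> 4
            then ln (1 + 2 * sqrt (norm (x - y) * sqrt ((norm (x + y))\<^sup>2 + (norm (x - y))\<^sup>2)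
                                    / (4 - (norm (x + y))\<^sup>2 - (norm (x - y))\<^sup>2)))
            else ln (1 + 2 * norm (x - y) / sqrt ((2 - norm (x + y))\<^sup>2 + (norm (x - y))\<^sup>2)))"
    (is "_ \<ge> (if _ then _ else if ?near then _ else _)")
proof -
  define d where "d = norm (x - y)"
  have "0 \<le> d"
    by (simp add: d_def)
  consider "x = y" | "x \<noteq> y" "?near" | "x \<noteq> y" "\<not> ?near"
    by blast
  then show ?thesis
  proof cases
    case 1
    then show ?thesis
      using sic_metric_unit_disc_ge[OF assms, of 1 "norm (1 - x) * norm (1 - y)"] by simp
  next
    case 2
    define Q T where "Q = 4 - (norm (x + y))\<^sup>2 - d\<^sup>2" and "T = (norm (x + y))\<^sup>2 + d\<^sup>2"
    obtain p where "norm p = 1" and "norm (p - x) * norm (p - y) \<le> d * Q / (4 * sqrt T)"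
      using exists_unit_circle_product_le_small_midpoint[OF assms 2(1,2)] unfolding d_def Q_def T_def by blast
    then have "ln (1 + d / sqrt (d * Q / (4 * sqrt T))) \<le> sic_metric (ball 0 1) x y"
      unfolding d_def by (rule sic_metric_unit_disc_ge[OF assms])
    moreover have "d / sqrt (d * Q / (4 * sqrt T)) = 2 * sqrt (d * sqrt T / Q)"
    proof -
      have "d / sqrt (d * Q / (4 * sqrt T)) = sqrt (4 * (d * sqrt T / Q))"
        using div_sqrt_mult[OF \<open>0 \<le> d\<close>, of "Q / (4 * sqrt T)"] by (simp add: field_simps)
      then show ?thesis
        by (simp only: real_sqrt_mult real_sqrt_four)
    qed
    ultimately show ?thesis
      using 2 by (simp add: d_def Q_def T_def)
  next
    case 3
    define V where "V = (2 - norm (x + y))\<^sup>2 + d\<^sup>2"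
    obtain p where "norm p = 1" and "norm (p - x) * norm (p - y) \<le> V / 4"
      using exists_unit_circle_product_le_radial[OF assms] unfolding d_def V_def by blast
    then have "ln (1 + d / sqrt (V / 4)) \<le> sic_metric (ball 0 1) x y"
      unfolding d_def by (rule sic_metric_unit_disc_ge[OF assms])
    moreover have "d / sqrt (V / 4) = 2 * d / sqrt V"
      by (simp add: real_sqrt_divide)
    ultimately show ?thesis
      using 3 by (simp add: d_def V_def)
  qed
qed

lemma sic_metric_unit_disc_upper:
  fixes x y :: complex
  assumes "norm x < 1" and "norm y < 1" and "norm (x + y) + norm (x - y) < 2"
  shows "sic_metric (ball 0 1) x y
           \<le> ln (1 + 2 * norm (x - y) / sqrt ((2 - norm (x + y))\<^sup>2 - (norm (x - y))\<^sup>2))"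
proof (rule sic_metric_le_of_frontier_bound)
  show "frontier (ball (0::complex) 1) \<noteq> {}"
    using norm_one by force
next
  define W where "W = (2 - norm (x + y))\<^sup>2 - (norm (x - y))\<^sup>2"
  fix p :: complex
  assume "p \<in> frontier (ball 0 1)"
  then have prod: "W / 4 \<le> dist x p * dist y p"
    using unit_circle_product_ge[OF assms(1,2)] by (simp add: W_def dist_norm norm_minus_commute)
  have "0 < W"
    using assms(3) by (simp add: W_def power_strict_mono)
  have "sqrt W / 2 \<le> sqrt (dist x p * dist y p)"
    using real_sqrt_le_mono[OF prod] by (simp add: real_sqrt_divide)
  then have "dist x y / sqrt (dist x p * dist y p) \<le> dist x y / (sqrt W / 2)"
    using prod \<open>0 < W\<close> by (intro divide_left_mono mult_pos_pos) auto
  then show "dist x y / sqrt (dist x p * dist y p)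
               \<le> 2 * norm (x - y) / sqrt ((2 - norm (x + y))\<^sup>2 - (norm (x - y))\<^sup>2)"
    by (simp add: W_def dist_norm mult.commute)
qed

theorem theorem3p6:
  fixes x y :: "real^2"
  assumes "x \<in> ball 0 1" and "y \<in> ball 0 1"
  shows "sic_metric (ball 0 1) x y \<ge>
           (if x = y then 0
            else if norm (x + y) * (1 + 4 / ((norm (x + y))\<^sup>2 + (norm (x - y))\<^sup>2)) \<le> 4
            then ln (1 + 2 * sqrt (norm (x - y) * sqrt ((norm (x + y))\<^sup>2 + (norm (x - y))\<^sup>2)
                                    / (4 - (norm (x + y))\<^sup>2 - (norm (x - y))\<^sup>2)))
            else ln (1 + 2 * norm (x - y) / sqrt ((2 - norm (x + y))\<^sup>2 + (norm (x - y))\<^sup>2)))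
         \<and> (norm (x + y) + norm (x - y) < 2 \<longrightarrow>
           sic_metric (ball 0 1) x y \<le>
           ln (1 + 2 * norm (x - y) / sqrt ((2 - norm (x + y))\<^sup>2 - (norm (x - y))\<^sup>2)))"
proof -
  define X Y where "X = complex_of_vec2 x" and "Y = complex_of_vec2 y"
  have "norm X < 1" "norm Y < 1"
    using assms by (simp_all add: X_def Y_def)
  have norms: "norm (x + y) = norm (X + Y)" "norm (x - y) = norm (X - Y)"
    by (simp_all add: X_def Y_def flip: complex_of_vec2_add complex_of_vec2_diff)
  have eq: "(x = y) = (X = Y)"
    by (metis X_def Y_def complex_of_vec2_diff norm_complex_of_vec2 norm_eq_zero right_minus_eq)
  have sic: "sic_metric (ball 0 1) x y = sic_metric (ball 0 1) X Y"
    by (simp add: X_def Y_def sic_metric_unit_ball_complex_of_vec2)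
  show ?thesis
    unfolding norms eq sic
    using sic_metric_unit_disc_lower sic_metric_unit_disc_upper \<open>norm X < 1\<close> \<open>norm Y < 1\<close>
    by blast
qed

end
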